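(* Let $M$ be a smooth manifold and $\alpha\in\Lambda$. Then $1+d\alpha$ is real if and only if $\alpha$ is the sum of a closed form and a real form. Also, $1+d\alpha$ is of modulus one (i.e. $(1+d\alpha)\wedge\overline{(1+d\alpha)}=1$) if and only if $\alpha$ is the sum of a closed form and a special imaginary form.
   Context: $\Lambda=\Omega^{\rm odd}(M,\mathbb C)/d\Omega^{\rm even}(M,\mathbb C)$; for odd forms $\alpha\stackrel\cap+\beta=\alpha+\beta+\alpha\wedge d\beta$ (a group law on $\Lambda$). $\gamma\in\Lambda$ is special imaginary if $\gamma\stackrel\cap+\overline\gamma=0$. *)

theory Defs
  imports Complex_Main
begin

text \<open>
  Abstract model of the complex de Rham algebra (Omega(M,C), wedge, d, conjugation) of a
  smooth manifold M.  Forms are elements of a type 'f with ring operations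
  (+ is addition of forms, * is the wedge product, 1 is the constant function 1),
  sc is multiplication by complex scalars, Ev / Od are the subspaces of even / odd
  (inhomogeneous) forms, d is the exterior derivative and cj is complex conjugation.
\<close>

definition forms_algebra ::
  "'f::ring_1 set \<Rightarrow> 'f set \<Rightarrow> (complex \<Rightarrow> 'f \<Rightarrow> 'f) \<Rightarrow> ('f \<Rightarrow> 'f) \<Rightarrow> ('f \<Rightarrow> 'f) \<Rightarrow> bool"
  where
  "forms_algebra Ev Od sc d cj \<longleftrightarrow>
     \<comment> \<open>complex algebra structure\<close>
     (\<forall>a x y. sc a (x + y) = sc a x + sc a y) \<and>
     (\<forall>a b x. sc (a + b) x = sc a x + sc b x) \<and>
     (\<forall>a b x. sc a (sc b x) = sc (a * b) x) \<and>
     (\<forall>x. sc 1 x = x) \<and>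
     (\<forall>a x y. sc a (x * y) = sc a x * y \<and> sc a (x * y) = x * sc a y) \<and>
     \<comment> \<open>Z/2-grading into even and odd forms\<close>
     0 \<in> Ev \<and> 0 \<in> Od \<and> 1 \<in> Ev \<and>
     (\<forall>x\<in>Ev. \<forall>y\<in>Ev. x + y \<in> Ev) \<and> (\<forall>x\<in>Od. \<forall>y\<in>Od. x + y \<in> Od) \<and>
     (\<forall>a. \<forall>x\<in>Ev. sc a x \<in> Ev) \<and> (\<forall>a. \<forall>x\<in>Od. sc a x \<in> Od) \<and>
     (\<forall>x. \<exists>e\<in>Ev. \<exists>u\<in>Od. x = e + u) \<and> Ev \<inter> Od = {0} \<and>
     (\<forall>x\<in>Ev. \<forall>y\<in>Ev. x * y \<in> Ev) \<and> (\<forall>x\<in>Ev. \<forall>y\<in>Od. x * y \<in> Od) \<and>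
     (\<forall>x\<in>Od. \<forall>y\<in>Ev. x * y \<in> Od) \<and> (\<forall>x\<in>Od. \<forall>y\<in>Od. x * y \<in> Ev) \<and>
     \<comment> \<open>graded commutativity of the wedge product\<close>
     (\<forall>x\<in>Ev. \<forall>y. x * y = y * x) \<and>
     (\<forall>x\<in>Od. \<forall>y\<in>Od. x * y = - (y * x)) \<and>
     \<comment> \<open>exterior derivative\<close>
     (\<forall>x y. d (x + y) = d x + d y) \<and> (\<forall>a x. d (sc a x) = sc a (d x)) \<and>
     (\<forall>x\<in>Ev. d x \<in> Od) \<and> (\<forall>x\<in>Od. d x \<in> Ev) \<and>
     (\<forall>x. d (d x) = 0) \<and>
     (\<forall>x\<in>Ev. \<forall>y. d (x * y) = d x * y + x * d y) \<and>
     (\<forall>x\<in>Od. \<forall>y. d (x * y) = d x * y - x * d y) \<and>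
     \<comment> \<open>complex conjugation\<close>
     (\<forall>x y. cj (x + y) = cj x + cj y) \<and> (\<forall>a x. cj (sc a x) = sc (cnj a) (cj x)) \<and>
     (\<forall>x. cj (cj x) = x) \<and> (\<forall>x y. cj (x * y) = cj x * cj y) \<and> cj 1 = 1 \<and>
     (\<forall>x\<in>Ev. cj x \<in> Ev) \<and> (\<forall>x\<in>Od. cj x \<in> Od) \<and>
     (\<forall>x. d (cj x) = cj (d x))"

text \<open>Equality in Lambda = Omega^odd / d Omega^even of (representatives) a, b.\<close>
definition lam_eq :: "'f::ring_1 set \<Rightarrow> ('f \<Rightarrow> 'f) \<Rightarrow> 'f \<Rightarrow> 'f \<Rightarrow> bool" where
  "lam_eq Ev d a b \<longleftrightarrow> (\<exists>e\<in>Ev. a = b + d e)"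

definition cap_plus :: "('f::ring_1 \<Rightarrow> 'f) \<Rightarrow> 'f \<Rightarrow> 'f \<Rightarrow> 'f" where
  "cap_plus d a b = a + b + a * d b"

definition special_imaginary ::
  "'f::ring_1 set \<Rightarrow> 'f set \<Rightarrow> ('f \<Rightarrow> 'f) \<Rightarrow> ('f \<Rightarrow> 'f) \<Rightarrow> 'f \<Rightarrow> bool" where
  "special_imaginary Ev Od d cj g \<longleftrightarrow> g \<in> Od \<and> lam_eq Ev d (cap_plus d g (cj g)) 0"

end

theory Submission
  imports Defs
begin

text \<open>
  For odd a the map a \<mapsto> 1 + d a turns the group law of Lambda into the wedge product:
  (1 + d a) (1 + d b) = 1 + d (a cap+ b), and it commutes with conjugation. Hence 1 + d a is
  real iff a - conj a is closed, and then a = (a - conj a)/2 + (a + conj a)/2. It has modulus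
  one iff b = a cap+ conj a is closed. Graded commutativity shows that b is real up to the
  exact form d (conj a \<wedge> a), so c = b/2 is closed and g = a - c satisfies
  g cap+ conj g = b - c - conj c - c \<wedge> d (conj a), which is exact because c is closed.
\<close>

locale de_Rham_algebra = sc: module sc + d: additive d + cj: additive cj
  for sc :: "complex \<Rightarrow> 'f::ring_1 \<Rightarrow> 'f" and d cj :: "'f \<Rightarrow> 'f" +
  fixes Ev Od :: "'f set"
  assumes Ev_zero: "0 \<in> Ev"
    and Ev_add: "x \<in> Ev \<Longrightarrow> y \<in> Ev \<Longrightarrow> x + y \<in> Ev"
    and Ev_scale: "x \<in> Ev \<Longrightarrow> sc a x \<in> Ev"
    and Od_add: "x \<in> Od \<Longrightarrow> y \<in> Od \<Longrightarrow> x + y \<in> Od"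
    and Od_scale: "x \<in> Od \<Longrightarrow> sc a x \<in> Od"
    and Od_mult_Ev: "x \<in> Od \<Longrightarrow> y \<in> Ev \<Longrightarrow> x * y \<in> Od"
    and Od_mult_Od: "x \<in> Od \<Longrightarrow> y \<in> Od \<Longrightarrow> x * y \<in> Ev"
    and Ev_mult_commute: "x \<in> Ev \<Longrightarrow> x * y = y * x"
    and d_Od: "x \<in> Od \<Longrightarrow> d x \<in> Ev"
    and d_d: "d (d x) = 0"
    and d_scale: "d (sc a x) = sc a (d x)"
    and d_mult_Od: "x \<in> Od \<Longrightarrow> d (x * y) = d x * y - x * d y"
    and cj_scale: "cj (sc a x) = sc (cnj a) (cj x)"
    and cj_cj: "cj (cj x) = x"
    and cj_mult: "cj (x * y) = cj x * cj y"
    and cj_one: "cj 1 = 1"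
    and cj_Od: "x \<in> Od \<Longrightarrow> cj x \<in> Od"
    and d_cj: "d (cj x) = cj (d x)"

lemma de_Rham_algebra_if_forms_algebra:
  "forms_algebra Ev Od sc d cj \<Longrightarrow> de_Rham_algebra sc d cj Ev Od"
  unfolding forms_algebra_def de_Rham_algebra_def de_Rham_algebra_axioms_def module_def additive_def
  by (elim conjE) (intro conjI allI impI; metis)

context de_Rham_algebra
begin

lemma Od_uminus: "x \<in> Od \<Longrightarrow> - x \<in> Od"
  using Od_scale[of x "- 1"] by simp

lemma Od_diff: "x \<in> Od \<Longrightarrow> y \<in> Od \<Longrightarrow> x - y \<in> Od"
  using Od_add Od_uminus by (metis diff_conv_add_uminus)

lemma scale_half_double: "sc (1/2) x + sc (1/2) x = x"
  using sc.scale_left_distrib[of "1/2" "1/2" x] by simp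

lemma lam_eq_refl: "lam_eq Ev d a a"
  unfolding lam_eq_def using Ev_zero d.zero by force

lemma d_eq_if_lam_eq: "lam_eq Ev d a b \<Longrightarrow> d a = d b"
  unfolding lam_eq_def by (auto simp: d.add d_d)

lemma closed_mult_d: "c \<in> Od \<Longrightarrow> d c = 0 \<Longrightarrow> c * d x = - d (c * x)"
  by (simp add: d_mult_Od)

lemma d_cap_plus: "a \<in> Od \<Longrightarrow> d (cap_plus d a b) = d a + d b + d a * d b"
  by (simp add: cap_plus_def d.add d_mult_Od d_d)

lemma one_plus_d_mult: "a \<in> Od \<Longrightarrow> (1 + d a) * (1 + d b) = 1 + d (cap_plus d a b)"
  by (simp add: d_cap_plus algebra_simps)

lemma cj_one_plus_d: "cj (1 + d a) = 1 + d (cj a)"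
  by (simp add: cj.add cj_one d_cj)

lemma cj_cap_plus_cj:
  assumes "a \<in> Od"
  shows "cj (cap_plus d a (cj a)) = cap_plus d a (cj a) - d (cj a * a)"
proof -
  have "d (cj a) * a = a * d (cj a)"
    using Ev_mult_commute d_Od cj_Od assms by blast
  then show ?thesis
    using d_mult_Od[OF cj_Od[OF assms], of a]
    by (simp add: cap_plus_def cj.add cj_mult cj_cj d_cj algebra_simps)
qed

lemma real_one_plus_d_iff:
  assumes "a \<in> Od"
  shows "cj (1 + d a) = 1 + d a \<longleftrightarrow>
    (\<exists>c r. c \<in> Od \<and> d c = 0 \<and> r \<in> Od \<and> cj r = r \<and> lam_eq Ev d a (c + r))"
proof
  assume "cj (1 + d a) = 1 + d a"
  then have real: "d (cj a) = d a"
    by (simp add: cj_one_plus_d)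
  define c where "c = sc (1/2) (a - cj a)"
  define r where "r = sc (1/2) (a + cj a)"
  have "c \<in> Od" "r \<in> Od"
    unfolding c_def r_def using assms by (simp_all add: Od_scale Od_diff Od_add cj_Od)
  moreover have "d c = 0"
    by (simp add: c_def d_scale d.diff real)
  moreover have "cj r = r"
    by (simp add: r_def cj_scale cj.add cj_cj add.commute)
  moreover have "c + r = a"
    by (simp add: c_def r_def sc.scale_right_diff_distrib sc.scale_right_distrib
        scale_half_double)
  then have "lam_eq Ev d a (c + r)"
    by (simp add: lam_eq_refl)
  ultimately show "\<exists>c r. c \<in> Od \<and> d c = 0 \<and> r \<in> Od \<and> cj r = r \<and> lam_eq Ev d a (c + r)"
    by blast
next
  assume "\<exists>c r. c \<in> Od \<and> d c = 0 \<and> r \<in> Od \<and> cj r = r \<and> lam_eq Ev d a (c + r)"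
  then obtain c r where "d c = 0" "cj r = r" "d a = d (c + r)"
    using d_eq_if_lam_eq by blast
  then show "cj (1 + d a) = 1 + d a"
    by (metis cj_one_plus_d d.add add_0)
qed

lemma unimodular_one_plus_d_iff:
  "a \<in> Od \<Longrightarrow> (1 + d a) * cj (1 + d a) = 1 \<longleftrightarrow> d (cap_plus d a (cj a)) = 0"
  by (simp add: cj_one_plus_d one_plus_d_mult)

lemma closed_plus_special_imaginary:
  assumes "a \<in> Od" and closed: "d (cap_plus d a (cj a)) = 0"
  shows "\<exists>c g. c \<in> Od \<and> d c = 0 \<and> special_imaginary Ev Od d cj g \<and> lam_eq Ev d a (c + g)"
proof -
  define \<beta> where "\<beta> = cap_plus d a (cj a)"
  define c where "c = sc (1/2) \<beta>"
  define g where "g = a - c"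
  have \<beta>_Od: "\<beta> \<in> Od"
    unfolding \<beta>_def cap_plus_def using assms
    by (simp add: Od_add Od_mult_Ev cj_Od d_Od)
  have c_Od: "c \<in> Od" and g_Od: "g \<in> Od"
    unfolding c_def g_def using \<beta>_Od assms by (simp_all add: Od_scale Od_diff)
  have dc: "d c = 0"
    using closed by (simp add: c_def \<beta>_def d_scale)
  have cj_c: "cj c = c - d (sc (1/2) (cj a * a))"
    using cj_cap_plus_cj[OF assms(1)]
    by (simp add: c_def \<beta>_def cj_scale d_scale sc.scale_right_diff_distrib)
  have d_cj_g: "d (cj g) = d (cj a)"
    by (simp add: g_def cj.diff d.diff d_cj[symmetric] cj_c dc d_d)
  have "cap_plus d g (cj g) = g + cj g + g * d (cj a)"
    by (simp add: cap_plus_def d_cj_g)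
  also have "\<dots> = \<beta> - (c + c) + d (sc (1/2) (cj a * a)) - c * d (cj a)"
    by (simp add: g_def \<beta>_def cap_plus_def cj.diff cj_c algebra_simps)
  also have "\<dots> = d (sc (1/2) (cj a * a) + c * cj a)"
    using scale_half_double[of \<beta>] by (simp add: closed_mult_d[OF c_Od dc] d.add flip: c_def)
  finally have "special_imaginary Ev Od d cj g"
    unfolding special_imaginary_def lam_eq_def using g_Od assms c_Od
    by (auto intro!: bexI[of _ "sc (1/2) (cj a * a) + c * cj a"]
        simp: Ev_add Ev_scale Od_mult_Od cj_Od)
  moreover have "lam_eq Ev d a (c + g)"
    by (simp add: g_def lam_eq_refl)
  ultimately show ?thesis
    using c_Od dc by blast
qed

lemma closed_cap_plus_if_special_imaginary:
  assumes "a \<in> Od" and "d c = 0" and g: "special_imaginary Ev Od d cj g"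
    and "lam_eq Ev d a (c + g)"
  shows "d (cap_plus d a (cj a)) = 0"
proof -
  have "d a = d g"
    using assms d_eq_if_lam_eq by (simp add: d.add)
  moreover have "g \<in> Od" and "d (cap_plus d g (cj g)) = 0"
    using g unfolding special_imaginary_def using d_eq_if_lam_eq by (auto simp: d.zero)
  ultimately show ?thesis
    using assms(1) by (simp add: d_cap_plus d_cj)
qed

end

theorem mainTheorem10:
  fixes Ev Od :: "'f::ring_1 set" and sc :: "complex \<Rightarrow> 'f \<Rightarrow> 'f"
    and d cj :: "'f \<Rightarrow> 'f" and \<alpha> :: 'f
  assumes "forms_algebra Ev Od sc d cj"
    and "\<alpha> \<in> Od"
  shows "(cj (1 + d \<alpha>) = 1 + d \<alpha> \<longleftrightarrow>
            (\<exists>c r. c \<in> Od \<and> d c = 0 \<and> r \<in> Od \<and> cj r = r \<and> lam_eq Ev d \<alpha> (c + r)))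
       \<and> ((1 + d \<alpha>) * cj (1 + d \<alpha>) = 1 \<longleftrightarrow>
            (\<exists>c g. c \<in> Od \<and> d c = 0 \<and> special_imaginary Ev Od d cj g \<and> lam_eq Ev d \<alpha> (c + g)))"
proof -
  interpret de_Rham_algebra sc d cj Ev Od
    using de_Rham_algebra_if_forms_algebra[OF assms(1)] .
  show ?thesis
    using assms(2) real_one_plus_d_iff unimodular_one_plus_d_iff
      closed_plus_special_imaginary closed_cap_plus_if_special_imaginary
    by blast
qed

end
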